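(* Let $G$ be a word hyperbolic group and $0\to\mathbb Z\xrightarrow{\iota}E\xrightarrow{\pi}G\to1$ a central extension. Let $X$ be a finite set with a map to $E$ whose image is a symmetric generating set of $E$; write $\overline w\in E$ for the evaluation of $w\in X^*$ and $\pi(\overline w)$ for its image in $G$. Then there exists $C>0$ (an integer) such that for every $g\in G$ the maximum $$\max\{\overline w\,\iota(-C\,\mathrm{len}(w)) : w\in X^*,\ \pi(\overline w)=g\}$$ exists with respect to the natural total order on the fibre $\pi^{-1}(g)$. Moreover, there then exists $\lambda>0$ such that every word $w$ achieving this maximum defines a $(\lambda,0)$-quasigeodesic path in the Cayley graph of $G$ with respect to the generating set $\pi(\overline X)$.
   Context: The total order on a fibre $\pi^{-1}(g)$: for $h_1,h_2\in\pi^{-1}(g)$, $h_1\le h_2$ iff $h_2h_1^{-1}=\iota(n)$ with $n\ge 0$. A word $w=x_1\cdots x_n$ defines the path in the Cayley graph of $G$ through the vertices $\pi(\overline{x_1\cdots x_t})$, $t=0,\dots,n$. *)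

theory Defs
  imports Complex_Main "HOL-Algebra.Algebra"
begin

definition word_eval :: "('g, 'b) monoid_scheme \<Rightarrow> ('x \<Rightarrow> 'g) \<Rightarrow> 'x list \<Rightarrow> 'g" where
  "word_eval G phi w = foldr (\<lambda>x acc. phi x \<otimes>\<^bsub>G\<^esub> acc) w \<one>\<^bsub>G\<^esub>"

(* Word metric on G w.r.t. a (symmetric, generating) set S: d(a,b) = length of a
   shortest word over S representing a^{-1} b, i.e. the graph distance in the
   Cayley graph with edges g -- g s. *)
definition word_dist :: "('g, 'b) monoid_scheme \<Rightarrow> 'g set \<Rightarrow> 'g \<Rightarrow> 'g \<Rightarrow> nat" where
  "word_dist G S a b =
     (LEAST n. \<exists>ws. set ws \<subseteq> S \<and> length ws = n \<and> word_eval G id ws = inv\<^bsub>G\<^esub> a \<otimes>\<^bsub>G\<^esub> b)"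

definition gromov_product :: "('g, 'b) monoid_scheme \<Rightarrow> 'g set \<Rightarrow> 'g \<Rightarrow> 'g \<Rightarrow> 'g \<Rightarrow> real" where
  "gromov_product G S w x y =
     (real (word_dist G S w x) + real (word_dist G S w y) - real (word_dist G S x y)) / 2"

(* Word hyperbolic group: a group with a finite symmetric generating set whose
   word metric (= vertex set of the Cayley graph) is Gromov delta-hyperbolic. *)
definition hyperbolic_group :: "('g, 'b) monoid_scheme \<Rightarrow> bool" where
  "hyperbolic_group G \<longleftrightarrow> group G \<and>
     (\<exists>S (\<delta>::real). finite S \<and> S \<subseteq> carrier G \<and> (\<forall>s\<in>S. inv\<^bsub>G\<^esub> s \<in> S) \<and>
        generate G S = carrier G \<and> \<delta> \<ge> 0 \<and>
        (\<forall>w\<in>carrier G. \<forall>x\<in>carrier G. \<forall>y\<in>carrier G. \<forall>z\<in>carrier G.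
           gromov_product G S w x y \<ge>
             min (gromov_product G S w x z) (gromov_product G S w y z) - \<delta>))"

definition central_extension ::
  "(int \<Rightarrow> 'e) \<Rightarrow> ('e, 'b) monoid_scheme \<Rightarrow> ('e \<Rightarrow> 'g) \<Rightarrow> ('g, 'c) monoid_scheme \<Rightarrow> bool" where
  "central_extension iota E pr G \<longleftrightarrow> group E \<and> group G \<and>
     iota \<in> hom integer_group E \<and> inj iota \<and>
     pr \<in> hom E G \<and> pr ` carrier E = carrier G \<and>
     kernel E G pr = range iota \<and>
     (\<forall>n. \<forall>e\<in>carrier E. iota n \<otimes>\<^bsub>E\<^esub> e = e \<otimes>\<^bsub>E\<^esub> iota n)"

definition fibre_le :: "(int \<Rightarrow> 'e) \<Rightarrow> ('e, 'b) monoid_scheme \<Rightarrow> 'e \<Rightarrow> 'e \<Rightarrow> bool" where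
  "fibre_le iota E h1 h2 \<longleftrightarrow> (\<exists>n::int. n \<ge> 0 \<and> h2 \<otimes>\<^bsub>E\<^esub> inv\<^bsub>E\<^esub> h1 = iota n)"

definition quasigeodesic_path :: "('g \<Rightarrow> 'g \<Rightarrow> nat) \<Rightarrow> real \<Rightarrow> real \<Rightarrow> (nat \<Rightarrow> 'g) \<Rightarrow> nat \<Rightarrow> bool" where
  "quasigeodesic_path d lam eps p n \<longleftrightarrow>
     (\<forall>s\<le>n. \<forall>t\<le>n.
        \<bar>real s - real t\<bar> / lam - eps \<le> real (d (p s) (p t)) \<and>
        real (d (p s) (p t)) \<le> lam * \<bar>real s - real t\<bar> + eps)"

end

theory Submission
  imports Defs
begin

(* The heart of the proof is a linear bound: a word over X whose value is iota h has
   h \<le> K * length. For words over a hyperbolic generating set S, lifted to E by a section, this is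
   an induction on the length. By the four-point condition, a point of a loop farthest from the base
   point cannot be the midpoint of a geodesic segment of length 2k (k > 2 delta), so some cyclic
   rotation of the loop contains a subword of length at most 2k that has a strictly shorter word with
   the same value in G. Rotating a loop does not change its central value, and replacing the subword
   changes it by at most the maximum over the finitely many such short pairs. Words over X are
   rewritten over S at a constant cost.
   Hence, for C > K, the fibre coordinates of w \<otimes> iota (- C * length w) are bounded above and a
   maximiser w0 exists; exchanging a subword v of w0 for a geodesic u can only lower the value, which
   gives (C - K) |v| \<le> (C + K) |u|, i.e. w0 is a (C + K, 0)-quasigeodesic. *)

lemma word_eval_Nil [simp]: "word_eval G phi [] = \<one>\<^bsub>G\<^esub>"
  by (simp add: word_eval_def)

lemma word_eval_Cons [simp]: "word_eval G phi (x # w) = phi x \<otimes>\<^bsub>G\<^esub> word_eval G phi w"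
  by (simp add: word_eval_def)

lemma word_eval_map: "word_eval G f (map h w) = word_eval G (f \<circ> h) w"
  by (induction w) auto

lemma word_eval_cong: "(\<And>x. x \<in> set w \<Longrightarrow> f x = g x) \<Longrightarrow> word_eval G f w = word_eval G g w"
  by (induction w) auto

lemma obtain_map_preimage:
  assumes "set ys \<subseteq> f ` A"
  obtains xs where "set xs \<subseteq> A" "ys = map f xs"
proof -
  have "ys \<in> lists (f ` A)"
    using assms by auto
  then have "ys \<in> map f ` lists A"
    by (simp only: lists_image)
  then show ?thesis
    using that by auto
qed

context monoid
begin

lemma word_eval_closed [simp]: "phi ` set w \<subseteq> carrier G \<Longrightarrow> word_eval G phi w \<in> carrier G"
  by (induction w) auto

lemma word_eval_append:
  "phi ` set w1 \<subseteq> carrier G \<Longrightarrow> phi ` set w2 \<subseteq> carrier G \<Longrightarrow>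
   word_eval G phi (w1 @ w2) = word_eval G phi w1 \<otimes> word_eval G phi w2"
  by (induction w1) (auto simp: m_assoc)

end

context group
begin

lemma word_eval_rev_map_inv:
  assumes "\<forall>x\<in>set w. phi (ix x) = inv (phi x)" and "phi ` set w \<subseteq> carrier G"
  shows "word_eval G phi (rev (map ix w)) = inv (word_eval G phi w)"
  using assms
proof (induction w)
  case (Cons x w)
  have "phi ` set (rev (map ix w)) \<subseteq> carrier G" "phi ` set [ix x] \<subseteq> carrier G"
    using Cons.prems by auto
  then have "word_eval G phi (rev (map ix (x # w))) = inv (word_eval G phi w) \<otimes> inv (phi x)"
    using Cons by (simp add: word_eval_append)
  then show ?case
    using Cons.prems by (simp add: inv_mult_group)
qed simp

lemma word_eval_take_drop:
  assumes "phi ` set w \<subseteq> carrier G" and "a \<le> b"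
  shows "inv (word_eval G phi (take a w)) \<otimes> word_eval G phi (take b w) =
    word_eval G phi (take (b - a) (drop a w))"
proof -
  have closed: "phi ` set (take a w) \<subseteq> carrier G" "phi ` set (take (b - a) (drop a w)) \<subseteq> carrier G"
    using assms(1) set_take_subset set_drop_subset by fastforce+
  have "take b w = take a w @ take (b - a) (drop a w)"
    using take_add[of a "b - a" w] assms(2) by simp
  then show ?thesis
    using closed by (simp add: word_eval_append m_assoc[symmetric])
qed

lemma word_eval_rotate_central:
  assumes "phi ` set w \<subseteq> carrier G" and "word_eval G phi w = c"
    and "\<And>x. x \<in> carrier G \<Longrightarrow> c \<otimes> x = x \<otimes> c"
  shows "word_eval G phi (rotate m w) = c"
proof -
  define i where "i = m mod length w"
  define x y where "x = word_eval G phi (take i w)" and "y = word_eval G phi (drop i w)"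
  have closed: "phi ` set (take i w) \<subseteq> carrier G" "phi ` set (drop i w) \<subseteq> carrier G"
    using assms(1) set_take_subset set_drop_subset by fastforce+
  then have xy: "x \<in> carrier G" "y \<in> carrier G"
    unfolding x_def y_def by simp_all
  have c: "c \<in> carrier G"
    using assms(1,2) by auto
  have "x \<otimes> y = c"
    using assms(2) closed word_eval_append[of phi "take i w" "drop i w"]
    unfolding x_def y_def by simp
  then have "y = inv x \<otimes> c"
    using xy by (metis inv_solve_left m_closed)
  then have "y \<otimes> x = inv x \<otimes> (c \<otimes> x)"
    using xy c by (simp add: m_assoc)
  also have "\<dots> = c"
    using xy c assms(3)[of x] by (simp add: m_assoc[symmetric])
  finally have "y \<otimes> x = c" .
  then show ?thesis
    using closed by (simp add: rotate_drop_take i_def[symmetric] word_eval_append x_def y_def)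
qed

lemma words_of_generate:
  assumes "A \<subseteq> carrier G" and "\<forall>a\<in>A. inv a \<in> A" and "g \<in> generate G A"
  shows "\<exists>ws. set ws \<subseteq> A \<and> word_eval G id ws = g"
  using assms(3)
proof (induction rule: generate.induct)
  case one
  then show ?case by (intro exI[of _ "[]"]) simp
next
  case (incl h)
  then show ?case using assms by (intro exI[of _ "[h]"]) auto
next
  case (inv h)
  then show ?case using assms by (intro exI[of _ "[inv h]"]) auto
next
  case (eng h1 h2)
  then obtain w1 w2 where "set w1 \<subseteq> A" "word_eval G id w1 = h1"
    "set w2 \<subseteq> A" "word_eval G id w2 = h2"
    by blast
  then show ?case
    using assms(1) by (intro exI[of _ "w1 @ w2"]) (auto simp: word_eval_append id_def)
qed

end

lemma (in group_hom) word_eval_hom: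
  "phi ` set w \<subseteq> carrier G \<Longrightarrow> h (word_eval G phi w) = word_eval H (h \<circ> phi) w"
  by (induction w) auto

section \<open>Word metrics\<close>

locale word_metric = group G for G :: "('g, 'c) monoid_scheme" (structure) +
  fixes S :: "'g set"
  assumes gens_closed: "S \<subseteq> carrier G"
    and gens_inv_closed: "\<forall>s\<in>S. inv s \<in> S"
    and words_reach: "\<forall>g\<in>carrier G. \<exists>ws. set ws \<subseteq> S \<and> word_eval G id ws = g"
begin

lemma word_eval_gens_closed [simp]: "set ws \<subseteq> S \<Longrightarrow> word_eval G id ws \<in> carrier G"
  using gens_closed by (intro word_eval_closed) auto

lemma word_dist_le:
  assumes "set ws \<subseteq> S" and "word_eval G id ws = inv a \<otimes> b"
  shows "word_dist G S a b \<le> length ws"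
  unfolding word_dist_def by (rule Least_le) (use assms in blast)

lemma geodesic_word:
  assumes "a \<in> carrier G" and "b \<in> carrier G"
  obtains ws where "set ws \<subseteq> S" "length ws = word_dist G S a b" "word_eval G id ws = inv a \<otimes> b"
proof -
  have "\<exists>n ws. set ws \<subseteq> S \<and> length ws = n \<and> word_eval G id ws = inv a \<otimes> b"
    using words_reach assms by simp
  from LeastI_ex[OF this] show ?thesis
    unfolding word_dist_def[symmetric] using that by blast
qed

lemma word_dist_commute:
  assumes "a \<in> carrier G" and "b \<in> carrier G"
  shows "word_dist G S a b = word_dist G S b a"
proof -
  have le: "word_dist G S b a \<le> word_dist G S a b" if ab: "a \<in> carrier G" "b \<in> carrier G" for a b
  proof -
    obtain ws where ws: "set ws \<subseteq> S" "length ws = word_dist G S a b" "word_eval G id ws = inv a \<otimes> b"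
      using geodesic_word[OF ab] by blast
    have "word_eval G id (rev (map (\<lambda>s. inv s) ws)) = inv (inv a \<otimes> b)"
      using ws gens_closed by (subst word_eval_rev_map_inv) auto
    also have "\<dots> = inv b \<otimes> a"
      using ab by (simp add: inv_mult_group)
    finally have "word_dist G S b a \<le> length (rev (map (\<lambda>s. inv s) ws))"
      using ws gens_inv_closed by (intro word_dist_le) auto
    then show ?thesis
      using ws by simp
  qed
  show ?thesis
    using le[OF assms] le[OF assms(2,1)] by simp
qed

lemma word_dist_take_le:
  assumes "set w \<subseteq> S" and "a \<le> b"
  shows "word_dist G S (word_eval G id (take a w)) (word_eval G id (take b w)) \<le> b - a"
proof -
  have "word_dist G S (word_eval G id (take a w)) (word_eval G id (take b w)) \<le>
      length (take (b - a) (drop a w))"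
    using assms gens_closed set_take_subset set_drop_subset
    by (intro word_dist_le) (fastforce simp: word_eval_take_drop)+
  then show ?thesis
    by simp
qed

end

section \<open>Shortcuts of loops in hyperbolic Cayley graphs\<close>

lemma take_drop_rotate:
  assumes "a < length l" and "b + L \<le> length l"
  shows "take L (drop b (rotate a l)) = take L (drop (b + a) (l @ l))"
proof -
  have "take (L + b) (rotate a l) = take (L + b) (drop a (l @ l))"
    using assms by (simp add: rotate_drop_take take_append min_def, linarith)
  then have "drop b (take (L + b) (rotate a l)) = drop b (take (L + b) (drop a (l @ l)))"
    by simp
  then show ?thesis
    by (simp only: take_drop[symmetric] drop_drop)
qed

context word_metric
begin

(* The loop is read twice so that a window of length 2k around the farthest point never has to
   wrap around the end of the word. *)
lemma doubled_loop_farthest_point: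
  assumes l: "set l \<subseteq> S" "word_eval G id l = \<one>" and "k < length l"
  obtains c where "k \<le> c" "c < length l + k"
    "\<And>j. j \<le> 2 * length l \<Longrightarrow> word_dist G S (word_eval G id (take j (l @ l))) \<one> \<le>
       word_dist G S (word_eval G id (take c (l @ l))) \<one>"
proof -
  define n where "n = length l"
  define f where "f j = word_dist G S (word_eval G id (take j (l @ l))) \<one>" for j
  have closed: "id ` set (take j l) \<subseteq> carrier G" "id ` set l \<subseteq> carrier G" for j
    using l(1) gens_closed set_take_subset by fastforce+
  have periodic: "f (j + n) = f j" if "j \<le> n" for j
  proof -
    have "take (j + n) (l @ l) = l @ take j l" "take j (l @ l) = take j l"
      using that by (simp_all add: n_def)
    then show ?thesis
      unfolding f_def using closed l(2) by (simp only: word_eval_append) simp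
  qed
  have "0 < n"
    using assms(3) unfolding n_def by linarith
  then have "{..<2 * n} \<noteq> {}"
    by (simp add: lessThan_empty_iff)
  then obtain i0 where i0: "i0 < 2 * n" "Max (f ` {..<2 * n}) = f i0"
    using obtains_MAX[OF finite_lessThan, of "2 * n" f] by auto
  have below: "f j \<le> f i0" if "j < 2 * n" for j
  proof -
    have "f j \<le> Max (f ` {..<2 * n})"
      using that by (intro Max_ge) auto
    then show ?thesis
      using i0(2) by simp
  qed
  have far: "f j \<le> f i0" if "j \<le> 2 * n" for j
  proof (cases "j = 2 * n")
    case True
    then show ?thesis
      using periodic[of n] below[of n] \<open>0 < n\<close> by (simp add: mult_2)
  qed (use below that in simp)
  define c where "c = (if i0 < k then i0 + n else if n + k \<le> i0 then i0 - n else i0)"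
  have "f c = f i0"
    using periodic[of i0] periodic[of "i0 - n"] i0(1) assms(3) unfolding c_def n_def by auto
  then have "f j \<le> f c" if "j \<le> 2 * n" for j
    using far that by simp
  moreover have "k \<le> c" "c < n + k"
    unfolding c_def using i0(1) assms(3) n_def by auto
  ultimately show ?thesis
    using that unfolding f_def n_def by blast
qed

end

lemma gromov_product_double:
  "2 * gromov_product G S w x y =
    real (word_dist G S w x) + real (word_dist G S w y) - real (word_dist G S x y)"
  unfolding gromov_product_def by simp

locale hyperbolic_word_metric = word_metric +
  fixes \<delta> :: real
  assumes gromov_four_point: "\<forall>w\<in>carrier G. \<forall>x\<in>carrier G. \<forall>y\<in>carrier G. \<forall>z\<in>carrier G.
      gromov_product G S w x y \<ge> min (gromov_product G S w x z) (gromov_product G S w y z) - \<delta>"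
begin

lemma farthest_point_not_midpoint:
  assumes "x \<in> carrier G" "y \<in> carrier G" "z \<in> carrier G" "q \<in> carrier G"
    and "word_dist G S y q \<le> word_dist G S x q" "word_dist G S z q \<le> word_dist G S x q"
    and "word_dist G S x y = k" "word_dist G S x z = k" and "2 * \<delta> < real k"
  shows "word_dist G S y z < 2 * k"
proof -
  have "real k \<le> 2 * gromov_product G S x y q" "real k \<le> 2 * gromov_product G S x z q"
    using assms(5-8) by (simp_all add: gromov_product_double)
  then have "real k \<le> 2 * min (gromov_product G S x y q) (gromov_product G S x z q)"
    by (simp add: min_def)
  moreover have
    "min (gromov_product G S x y q) (gromov_product G S x z q) - \<delta> \<le> gromov_product G S x y z"
    using gromov_four_point assms(1-4) by blast
  moreover have "2 * gromov_product G S x y z = 2 * real k - real (word_dist G S y z)"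
    using assms(7,8) by (simp add: gromov_product_double)
  ultimately have "real (word_dist G S y z) < 2 * real k"
    using assms(9) by linarith
  then show ?thesis
    by linarith
qed

lemma path_shortcut_near_farthest_point:
  assumes path: "\<And>j. j \<le> N \<Longrightarrow> p j \<in> carrier G"
    and steps: "\<And>i j. i \<le> j \<Longrightarrow> word_dist G S (p i) (p j) \<le> j - i"
    and far: "\<And>j. j \<le> N \<Longrightarrow> word_dist G S (p j) q \<le> word_dist G S (p c) q" and "q \<in> carrier G"
    and "k \<le> c" "c + k \<le> N" "2 * \<delta> < real k"
  shows "\<exists>i L. c - k \<le> i \<and> i + L \<le> c + k \<and> word_dist G S (p i) (p (i + L)) < L"
proof -
  consider "word_dist G S (p (c - k)) (p c) < k" | "word_dist G S (p c) (p (c + k)) < k"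
    | "word_dist G S (p (c - k)) (p c) = k" "word_dist G S (p c) (p (c + k)) = k"
    using steps[of "c - k" c] steps[of c "c + k"] assms(5) by fastforce
  then show ?thesis
  proof cases
    case 1
    then show ?thesis
      using assms(5) by (intro exI[of _ "c - k"] exI[of _ k]) auto
  next
    case 2
    then show ?thesis
      by (intro exI[of _ c] exI[of _ k]) auto
  next
    case 3
    have "word_dist G S (p c) (p (c - k)) = k"
      using 3(1) path assms(6) word_dist_commute by simp
    from farthest_point_not_midpoint[OF path path path \<open>q \<in> carrier G\<close> far far this 3(2) assms(7)]
    have "word_dist G S (p (c - k)) (p (c + k)) < 2 * k"
      using assms(6) by simp
    moreover have eq: "c - k + 2 * k = c + k"
      using assms(5) by simp
    ultimately have "c - k \<le> c - k \<and> c - k + 2 * k \<le> c + k \<and>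
        word_dist G S (p (c - k)) (p (c - k + 2 * k)) < 2 * k"
      unfolding eq by simp
    then show ?thesis
      by blast
  qed
qed

lemma loop_shortcut:
  assumes "2 * \<delta> < real k" and l: "set l \<subseteq> S" "word_eval G id l = \<one>" "l \<noteq> []"
  shows "\<exists>m x v y u. rotate m l = x @ v @ y \<and> length v \<le> 2 * k \<and>
    set u \<subseteq> S \<and> length u < length v \<and> word_eval G id u = word_eval G id v"
proof (cases "length l \<le> 2 * k")
  case True
  then show ?thesis
    using l by (intro exI[of _ 0] exI[of _ "[]"] exI[of _ l] exI[of _ "[]"] exI[of _ "[]"]) auto
next
  case False
  define P where "P j = word_eval G id (take j (l @ l))" for j
  have ll: "set (l @ l) \<subseteq> S"
    using l by simp
  have P_closed: "P j \<in> carrier G" for j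
    unfolding P_def using ll set_take_subset by (metis subset_trans word_eval_gens_closed)
  have steps: "\<And>i j. i \<le> j \<Longrightarrow> word_dist G S (P i) (P j) \<le> j - i"
    unfolding P_def using word_dist_take_le[OF ll] .
  obtain c where c: "k \<le> c" "c < length l + k"
    "\<And>j. j \<le> 2 * length l \<Longrightarrow> word_dist G S (P j) \<one> \<le> word_dist G S (P c) \<one>"
    using doubled_loop_farthest_point[OF l(1,2), of k] False unfolding P_def by auto
  have "c + k \<le> 2 * length l"
    using c(2) False by linarith
  then obtain i L where iL: "c - k \<le> i" "i + L \<le> c + k" "word_dist G S (P i) (P (i + L)) < L"
    using path_shortcut_near_farthest_point[OF P_closed steps c(3) one_closed c(1) _ assms(1)]
    by blast
  define a b where "a = c - k" and "b = i - (c - k)"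
  define r where "r = rotate a l"
  define v where "v = take L (drop b r)"
  have "a < length l" "b + L \<le> length l" "i = b + a"
    using c False iL unfolding a_def b_def by linarith+
  then have "v = take L (drop i (l @ l))"
    unfolding v_def r_def by (simp add: take_drop_rotate)
  then have v: "word_eval G id v = inv (P i) \<otimes> P (i + L)"
    unfolding P_def using ll gens_closed by (subst word_eval_take_drop) auto
  obtain u where u: "set u \<subseteq> S" "length u = word_dist G S (P i) (P (i + L))"
    "word_eval G id u = inv (P i) \<otimes> P (i + L)"
    using geodesic_word[OF P_closed P_closed] by blast
  have "rotate a l = take b r @ v @ drop (b + L) r"
    unfolding r_def v_def by (metis append_take_drop_id drop_drop add.commute)
  moreover have "length v = L"
    using \<open>b + L \<le> length l\<close> unfolding v_def r_def by simp
  then have "length v \<le> 2 * k" "length u < length v"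
    using iL u(2) by linarith+
  ultimately show ?thesis
    using u(1) u(3) v
    by (intro exI[of _ a] exI[of _ "take b r"] exI[of _ v] exI[of _ "drop (b + L) r"] exI[of _ u])
      simp
qed

end

lemma hyperbolic_group_word_metric:
  assumes "hyperbolic_group G"
  obtains S \<delta> where "finite S" "hyperbolic_word_metric G S \<delta>"
proof -
  obtain S \<delta> where S: "group G" "finite S" "S \<subseteq> carrier G" "\<forall>s\<in>S. inv\<^bsub>G\<^esub> s \<in> S"
    "generate G S = carrier G"
    "\<forall>w\<in>carrier G. \<forall>x\<in>carrier G. \<forall>y\<in>carrier G. \<forall>z\<in>carrier G.
       gromov_product G S w x y \<ge> min (gromov_product G S w x z) (gromov_product G S w y z) - \<delta>"
    using assms unfolding hyperbolic_group_def by blast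
  have "word_metric G S"
    using S group.words_of_generate[OF S(1,3,4)]
    by (simp add: word_metric_def word_metric_axioms_def)
  then have "hyperbolic_word_metric G S \<delta>"
    using S(6) by (simp add: hyperbolic_word_metric_def hyperbolic_word_metric_axioms_def)
  then show ?thesis
    using that S(2) by blast
qed

section \<open>The fibre order of a central extension\<close>

lemma int_Sup_mem:
  fixes N :: "int set"
  assumes "N \<noteq> {}" and "bdd_above N"
  shows "Sup N \<in> N"
proof -
  obtain n where "n \<in> N" "Sup N - 1 < n"
    using less_cSup_iff[OF assms, of "Sup N - 1"] by auto
  moreover have "n \<le> Sup N"
    using cSup_upper[OF _ assms(2)] calculation(1) .
  ultimately have "n = Sup N"
    by linarith
  then show ?thesis
    using \<open>n \<in> N\<close> by simp
qed

locale central_ext =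
  fixes G :: "('g, 'c) monoid_scheme" and E :: "('e, 'b) monoid_scheme" (structure)
    and iota :: "int \<Rightarrow> 'e" and pr :: "'e \<Rightarrow> 'g"
  assumes central_extension: "central_extension iota E pr G"
begin

sublocale group E
  using central_extension unfolding central_extension_def by simp

sublocale pr: group_hom E G pr
  using central_extension unfolding central_extension_def group_hom_def group_hom_axioms_def
  by (simp add: group_axioms)

sublocale iota: group_hom integer_group E iota
  using central_extension unfolding central_extension_def group_hom_def group_hom_axioms_def
  by (simp add: group_axioms)

lemma iota_closed [simp]: "iota n \<in> carrier E"
  using iota.hom_closed by simp

lemma iota_add: "iota (m + n) = iota m \<otimes> iota n"
  using iota.hom_mult[of m n] by simp

lemma iota_zero [simp]: "iota 0 = \<one>"
  using iota.hom_one by simp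

lemma inj_iota: "inj iota"
  using central_extension unfolding central_extension_def by simp

lemma iota_eq_iff [simp]: "iota m = iota n \<longleftrightarrow> m = n"
  using inj_iota by (simp add: inj_eq)

lemma iota_eq_one_iff [simp]: "iota n = \<one> \<longleftrightarrow> n = 0"
  using iota_eq_iff[of n 0] by simp

lemma one_eq_iota_iff [simp]: "\<one> = iota n \<longleftrightarrow> n = 0"
  using iota_eq_one_iff by metis

lemma iota_central: "e \<in> carrier E \<Longrightarrow> iota n \<otimes> e = e \<otimes> iota n"
  using central_extension unfolding central_extension_def by simp

lemma pr_iota [simp]: "pr (iota n) = \<one>\<^bsub>G\<^esub>"
  using central_extension unfolding central_extension_def kernel_def by blast

lemma pr_surj: "pr ` carrier E = carrier G"
  using central_extension unfolding central_extension_def by simp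

lemma same_fibre_iota:
  assumes "a \<in> carrier E" "b \<in> carrier E" "pr a = pr b"
  obtains j where "a = iota j \<otimes> b"
proof -
  have "pr (a \<otimes> inv b) = \<one>\<^bsub>G\<^esub>"
    using assms by simp
  then have "a \<otimes> inv b \<in> range iota"
    using assms central_extension unfolding central_extension_def kernel_def by blast
  then obtain j where "a \<otimes> inv b = iota j"
    by (rule rangeE)
  then have "a = iota j \<otimes> b"
    using assms by (metis inv_solve_right' iota_closed)
  then show ?thesis
    using that by blast
qed

lemma iota_mult_cancel: "b \<in> carrier E \<Longrightarrow> iota m \<otimes> b = iota n \<otimes> b \<Longrightarrow> m = n"
  using r_cancel by (metis iota_closed iota_eq_iff)

lemma fibre_le_iota_mult:
  assumes "b \<in> carrier E"
  shows "fibre_le iota E (iota m \<otimes> b) (iota n \<otimes> b) \<longleftrightarrow> m \<le> n"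
proof -
  have "iota n \<otimes> b = iota (n - m) \<otimes> (iota m \<otimes> b)"
    using assms by (simp add: m_assoc[symmetric] flip: iota_add)
  then have "(iota n \<otimes> b) \<otimes> inv (iota m \<otimes> b) = iota (n - m)"
    using assms by (simp add: m_assoc)
  then show ?thesis
    unfolding fibre_le_def by auto
qed

lemma fibre_le_max_exists:
  assumes U: "U \<in> carrier E" and "P w1"
    and bounded: "\<And>w. P w \<Longrightarrow> \<exists>n. f w = iota n \<otimes> U \<and> n \<le> B"
  obtains w0 where "P w0" "\<And>w. P w \<Longrightarrow> fibre_le iota E (f w) (f w0)"
proof -
  define N where "N = {n. \<exists>w. P w \<and> f w = iota n \<otimes> U}"
  have "n \<le> B" if n: "n \<in> N" for n
  proof -
    obtain w where w: "P w" "f w = iota n \<otimes> U"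
      using n unfolding N_def by blast
    obtain n' where n': "f w = iota n' \<otimes> U" "n' \<le> B"
      using bounded[OF w(1)] by blast
    have "iota n \<otimes> U = iota n' \<otimes> U"
      using w(2) n'(1) by simp
    then have "n = n'"
      by (rule iota_mult_cancel[OF U])
    then show ?thesis
      using n'(2) by simp
  qed
  then have bdd: "bdd_above N"
    by (rule bdd_aboveI)
  obtain n1 where "f w1 = iota n1 \<otimes> U"
    using bounded[OF assms(2)] by blast
  then have "n1 \<in> N"
    unfolding N_def using assms(2) by blast
  then have "N \<noteq> {}"
    by blast
  from this bdd have "Sup N \<in> N"
    by (rule int_Sup_mem)
  then obtain w0 where w0: "P w0" "f w0 = iota (Sup N) \<otimes> U"
    unfolding N_def by blast
  have "fibre_le iota E (f w) (f w0)" if w: "P w" for w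
  proof -
    obtain n where n: "f w = iota n \<otimes> U"
      using bounded[OF w] by blast
    then have "n \<in> N"
      using w unfolding N_def by blast
    then have "n \<le> Sup N"
      using bdd by (rule cSup_upper)
    then show ?thesis
      unfolding n w0(2) fibre_le_iota_mult[OF U] .
  qed
  then show ?thesis
    by (rule that[OF w0(1)])
qed

lemma word_eval_splice:
  assumes "psi ` (set xs \<union> set v \<union> set u \<union> set ys) \<subseteq> carrier E"
    and "word_eval E psi v = iota j \<otimes> word_eval E psi u"
  shows "word_eval E psi (xs @ v @ ys) = iota j \<otimes> word_eval E psi (xs @ u @ ys)"
proof -
  have sets: "psi ` set xs \<subseteq> carrier E" "psi ` set v \<subseteq> carrier E" "psi ` set u \<subseteq> carrier E"
    "psi ` set ys \<subseteq> carrier E"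
    using assms(1) by auto
  then have closed: "word_eval E psi xs \<in> carrier E" "word_eval E psi u \<in> carrier E"
    "word_eval E psi ys \<in> carrier E"
    by simp_all
  have append3:
    "word_eval E psi (xs @ w @ ys) = word_eval E psi xs \<otimes> word_eval E psi w \<otimes> word_eval E psi ys"
    if "psi ` set w \<subseteq> carrier E" for w
  proof -
    have "word_eval E psi (xs @ w @ ys) = word_eval E psi xs \<otimes> word_eval E psi (w @ ys)"
      using sets that by (intro word_eval_append) auto
    also have "\<dots> = word_eval E psi xs \<otimes> (word_eval E psi w \<otimes> word_eval E psi ys)"
      using sets that by (subst word_eval_append) auto
    finally show ?thesis
      using sets that by (simp add: m_assoc)
  qed
  have "word_eval E psi (xs @ v @ ys) =
      word_eval E psi xs \<otimes> (iota j \<otimes> word_eval E psi u) \<otimes> word_eval E psi ys"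
    using append3[OF sets(2)] assms(2) by simp
  also have "\<dots> = iota j \<otimes> (word_eval E psi xs \<otimes> word_eval E psi u \<otimes> word_eval E psi ys)"
    using closed iota_central[OF closed(1)] by (simp add: m_assoc[symmetric])
  also have "\<dots> = iota j \<otimes> word_eval E psi (xs @ u @ ys)"
    using append3[OF sets(3)] by simp
  finally show ?thesis .
qed

lemma iota_mult_eq_iota:
  assumes "e \<in> carrier E" and "iota j \<otimes> e = iota n"
  shows "e = iota (n - j)"
proof -
  have "iota n = iota j \<otimes> iota (n - j)"
    by (simp flip: iota_add)
  then show ?thesis
    using assms by (metis iota_closed l_cancel)
qed

section \<open>Central values of loops grow linearly\<close>

lemma short_pairs_bounded:
  assumes "finite A" and "psi ` A \<subseteq> carrier E"
  obtains M where "M \<ge> 0"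
    "\<forall>v u j. set v \<subseteq> A \<longrightarrow> set u \<subseteq> A \<longrightarrow> length v \<le> N \<longrightarrow> length u \<le> N \<longrightarrow>
       word_eval E psi v = iota j \<otimes> word_eval E psi u \<longrightarrow> j \<le> M"
proof -
  define W where "W = {w. set w \<subseteq> A \<and> length w \<le> N}"
  define J where "J = iota -` ((\<lambda>(v, u). word_eval E psi v \<otimes> inv (word_eval E psi u)) ` (W \<times> W))"
  have "finite J"
    unfolding J_def W_def using finite_lists_length_le[OF assms(1)] inj_iota
    by (intro finite_vimageI) auto
  moreover have "j \<in> J" if "set v \<subseteq> A" "set u \<subseteq> A" "length v \<le> N" "length u \<le> N"
    "word_eval E psi v = iota j \<otimes> word_eval E psi u" for v u j
  proof -
    have "word_eval E psi u \<in> carrier E"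
      using that(2) assms(2) by (intro word_eval_closed) auto
    then have "iota j = word_eval E psi v \<otimes> inv (word_eval E psi u)"
      using that(5) by (simp add: m_assoc)
    then show ?thesis
      using that(1-4) unfolding J_def W_def by force
  qed
  ultimately show ?thesis
    using that[of "Max (insert 0 J)"] by auto
qed

lemma word_eval_lift:
  assumes "\<And>s. s \<in> S \<Longrightarrow> sigma s \<in> carrier E" and "\<And>s. s \<in> S \<Longrightarrow> pr (sigma s) = s"
    and "set w \<subseteq> S"
  shows "pr (word_eval E sigma w) = word_eval G id w"
proof -
  have "pr (word_eval E sigma w) = word_eval G (pr \<circ> sigma) w"
    using assms by (intro pr.word_eval_hom) auto
  also have "\<dots> = word_eval G id w"
    using assms by (intro word_eval_cong) auto
  finally show ?thesis .
qed

lemma loop_shortening: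
  assumes "hyperbolic_word_metric G S \<delta>" and k: "2 * \<delta> < real k"
    and sigma: "\<And>s. s \<in> S \<Longrightarrow> sigma s \<in> carrier E" "\<And>s. s \<in> S \<Longrightarrow> pr (sigma s) = s"
    and pairs: "\<forall>v u j. set v \<subseteq> S \<longrightarrow> set u \<subseteq> S \<longrightarrow> length v \<le> 2 * k \<longrightarrow> length u \<le> 2 * k \<longrightarrow>
      word_eval E sigma v = iota j \<otimes> word_eval E sigma u \<longrightarrow> j \<le> M"
    and l: "set l \<subseteq> S" "word_eval E sigma l = iota h" "l \<noteq> []"
  obtains l' h'
  where "set l' \<subseteq> S" "length l' < length l" "word_eval E sigma l' = iota h'" "h \<le> h' + M"
proof -
  interpret H: hyperbolic_word_metric G S \<delta>
    by fact
  have closed: "sigma ` set w \<subseteq> carrier E" if "set w \<subseteq> S" for w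
    using that sigma by auto
  have "word_eval G id l = \<one>\<^bsub>G\<^esub>"
    using word_eval_lift[OF sigma l(1)] l(2) by simp
  then obtain m x v y u where shortcut: "rotate m l = x @ v @ y" "length v \<le> 2 * k" "set u \<subseteq> S"
    "length u < length v" "word_eval G id u = word_eval G id v"
    using H.loop_shortcut[OF k l(1) _ l(3)] by blast
  have xvy: "set x \<subseteq> S" "set v \<subseteq> S" "set y \<subseteq> S"
    using l(1) arg_cong[OF shortcut(1), of set] by auto
  have "pr (word_eval E sigma v) = pr (word_eval E sigma u)"
    using word_eval_lift[OF sigma xvy(2)] word_eval_lift[OF sigma shortcut(3)] shortcut(5) by simp
  then obtain j where j: "word_eval E sigma v = iota j \<otimes> word_eval E sigma u"
    using same_fibre_iota closed[OF xvy(2)] closed[OF shortcut(3)] word_eval_closed by metis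
  have "word_eval E sigma (rotate m l) = iota h"
    using l closed iota_central by (intro word_eval_rotate_central) auto
  moreover have "sigma ` (set x \<union> set v \<union> set u \<union> set y) \<subseteq> carrier E"
    using xvy shortcut(3) sigma by auto
  ultimately have "iota j \<otimes> word_eval E sigma (x @ u @ y) = iota h"
    using shortcut(1) word_eval_splice[OF _ j] by simp
  moreover have xuy: "set (x @ u @ y) \<subseteq> S"
    using xvy shortcut(3) by simp
  ultimately have ev: "word_eval E sigma (x @ u @ y) = iota (h - j)"
    using word_eval_closed[OF closed[OF xuy]] by (intro iota_mult_eq_iota)
  have shorter: "length (x @ u @ y) < length l"
    using arg_cong[OF shortcut(1), of length] shortcut(4) by simp
  have "j \<le> M"
    using pairs[rule_format, OF xvy(2) shortcut(3,2) _ j] shortcut(2,4) by simp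
  then show ?thesis
    by (intro that[OF xuy shorter ev]) simp
qed

lemma hyperbolic_loop_height_linear:
  assumes "hyperbolic_word_metric G S \<delta>" and "finite S"
    and sigma: "\<And>s. s \<in> S \<Longrightarrow> sigma s \<in> carrier E" "\<And>s. s \<in> S \<Longrightarrow> pr (sigma s) = s"
  obtains M where "M \<ge> 0"
    "\<And>l h. set l \<subseteq> S \<Longrightarrow> word_eval E sigma l = iota h \<Longrightarrow> h \<le> M * int (length l)"
proof -
  define k where "k = nat \<lceil>2 * \<delta>\<rceil> + 1"
  have k: "2 * \<delta> < real k"
    unfolding k_def by linarith
  obtain M where M: "M \<ge> 0" and pairs: "\<forall>v u j. set v \<subseteq> S \<longrightarrow> set u \<subseteq> S \<longrightarrow>
      length v \<le> 2 * k \<longrightarrow> length u \<le> 2 * k \<longrightarrow>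
      word_eval E sigma v = iota j \<otimes> word_eval E sigma u \<longrightarrow> j \<le> M"
    using short_pairs_bounded[OF assms(2), of sigma "2 * k"] sigma by blast
  have "h \<le> M * int (length l)" if "set l \<subseteq> S" "word_eval E sigma l = iota h" for l h
    using that
  proof (induction "length l" arbitrary: l h rule: less_induct)
    case less
    show ?case
    proof (cases "l = []")
      case True
      then show ?thesis
        using less.prems by simp
    next
      case False
      obtain l' h' where l': "set l' \<subseteq> S" "length l' < length l" "word_eval E sigma l' = iota h'"
        "h \<le> h' + M"
        using loop_shortening[OF assms(1) k sigma pairs less.prems False] by blast
      have "h' \<le> M * int (length l')"
        by (rule less.hyps[OF l'(2,1,3)])
      moreover have "M * int (length l') \<le> M * (int (length l) - 1)"
        using l'(2) M by (intro mult_left_mono) auto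
      ultimately show ?thesis
        using l'(4) by (simp add: algebra_simps)
    qed
  qed
  then show ?thesis
    using that M by blast
qed

lemma word_eval_concat_lift:
  assumes "set l \<subseteq> A" and "phi ` A \<subseteq> carrier E" and "\<And>x. x \<in> A \<Longrightarrow> sigma ` set (r x) \<subseteq> carrier E"
    and "\<And>x. x \<in> A \<Longrightarrow> word_eval E sigma (r x) = iota (c x) \<otimes> phi x"
  shows "word_eval E sigma (concat (map r l)) = iota (sum_list (map c l)) \<otimes> word_eval E phi l"
  using assms(1)
proof (induction l)
  case (Cons x l)
  have x: "x \<in> A" and l: "set l \<subseteq> A"
    using Cons.prems by simp_all
  have "phi ` set l \<subseteq> carrier E"
    using l assms(2) by auto
  moreover have "sigma ` set (r y) \<subseteq> carrier E" if "y \<in> set l" for y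
    using assms(3) l that by blast
  ultimately have closed: "phi x \<in> carrier E" "word_eval E phi l \<in> carrier E"
    "sigma ` set (concat (map r l)) \<subseteq> carrier E"
    using x assms(2) by auto
  have "word_eval E sigma (concat (map r (x # l))) =
      word_eval E sigma (r x) \<otimes> word_eval E sigma (concat (map r l))"
    using assms(3)[OF x] closed(3) by (simp add: word_eval_append)
  also have "\<dots> = iota (c x) \<otimes> (phi x \<otimes> iota (sum_list (map c l))) \<otimes> word_eval E phi l"
    using Cons.IH[OF l] assms(4)[OF x] closed by (simp add: m_assoc)
  also have "\<dots> = iota (c x) \<otimes> (iota (sum_list (map c l)) \<otimes> phi x) \<otimes> word_eval E phi l"
    by (simp only: iota_central[OF closed(1)])
  also have "\<dots> = iota (sum_list (map c (x # l))) \<otimes> word_eval E phi (x # l)"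
    using closed by (simp add: iota_add m_assoc)
  finally show ?case .
qed simp

lemma loop_height_transfer:
  assumes "finite Xg" and phi: "phi ` Xg \<subseteq> carrier E" and sigma: "\<And>s. s \<in> S \<Longrightarrow> sigma s \<in> carrier E"
    and M: "M \<ge> 0" "\<And>l h. set l \<subseteq> S \<Longrightarrow> word_eval E sigma l = iota h \<Longrightarrow> h \<le> M * int (length l)"
    and r: "\<And>x. x \<in> Xg \<Longrightarrow> set (r x) \<subseteq> S"
    and c: "\<And>x. x \<in> Xg \<Longrightarrow> word_eval E sigma (r x) = iota (c x) \<otimes> phi x"
  obtains K where "K \<ge> 0"
    "\<And>l h. set l \<subseteq> Xg \<Longrightarrow> word_eval E phi l = iota h \<Longrightarrow> h \<le> K * int (length l)"
proof -
  define R where "R = Max (insert 0 ((\<lambda>x. length (r x)) ` Xg))"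
  define B where "B = Max (insert 0 ((\<lambda>x. - c x) ` Xg))"
  have r_closed: "sigma ` set (r x) \<subseteq> carrier E" if "x \<in> Xg" for x
    using r[OF that] sigma by auto
  have R: "length (r x) \<le> R" and B: "- c x \<le> B" if "x \<in> Xg" for x
    unfolding R_def B_def using that \<open>finite Xg\<close> by simp_all
  have "h \<le> (M * int R + B) * int (length l)"
    if l: "set l \<subseteq> Xg" "word_eval E phi l = iota h" for l h
  proof -
    have "word_eval E sigma (concat (map r l)) = iota (sum_list (map c l)) \<otimes> word_eval E phi l"
      by (rule word_eval_concat_lift[OF l(1) phi r_closed c])
    then have "word_eval E sigma (concat (map r l)) = iota (sum_list (map c l) + h)"
      using l(2) by (simp add: iota_add)
    moreover have "set (concat (map r l)) \<subseteq> S"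
      using r l(1) by auto
    ultimately have "sum_list (map c l) + h \<le> M * int (length (concat (map r l)))"
      using M(2) by blast
    moreover have "sum_list (map (length \<circ> r) l) \<le> sum_list (map (\<lambda>_. R) l)"
      using l(1) R by (intro sum_list_mono) auto
    then have "length (concat (map r l)) \<le> length l * R"
      unfolding length_concat map_map by (simp add: sum_list_triv)
    then have "M * int (length (concat (map r l))) \<le> M * (int R * int (length l))"
      using M(1) by (intro mult_left_mono) (simp_all flip: of_nat_mult add: mult.commute)
    moreover have "sum_list (map (uminus \<circ> c) l) \<le> sum_list (map (\<lambda>_. B) l)"
      using l(1) B by (intro sum_list_mono) auto
    then have "- sum_list (map c l) \<le> B * int (length l)"
      unfolding uminus_sum_list_map by (simp add: sum_list_triv mult.commute)
    ultimately show ?thesis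
      by (simp add: algebra_simps)
  qed
  moreover have "M * int R + B \<ge> 0"
    using M(1) \<open>finite Xg\<close> unfolding B_def by simp
  ultimately show ?thesis
    using that by blast
qed

lemma pr_section:
  assumes "S \<subseteq> carrier G"
  obtains sigma where "\<And>s. s \<in> S \<Longrightarrow> sigma s \<in> carrier E" "\<And>s. s \<in> S \<Longrightarrow> pr (sigma s) = s"
proof -
  have "\<forall>s\<in>S. \<exists>e. e \<in> carrier E \<and> pr e = s"
  proof
    fix s assume "s \<in> S"
    then have "s \<in> pr ` carrier E"
      using pr_surj assms by auto
    then show "\<exists>e. e \<in> carrier E \<and> pr e = s"
      by auto
  qed
  from bchoice[OF this] show ?thesis
    using that by blast
qed

lemma loop_height_linear:
  assumes "hyperbolic_group G" and "finite Xg" and phi: "phi ` Xg \<subseteq> carrier E"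
  obtains K where "K \<ge> 0"
    "\<And>l h. set l \<subseteq> Xg \<Longrightarrow> word_eval E phi l = iota h \<Longrightarrow> h \<le> K * int (length l)"
proof -
  obtain S \<delta> where S: "finite S" "hyperbolic_word_metric G S \<delta>"
    using hyperbolic_group_word_metric[OF assms(1)] .
  interpret H: hyperbolic_word_metric G S \<delta>
    by (fact S(2))
  obtain sigma where sigma: "\<And>s. s \<in> S \<Longrightarrow> sigma s \<in> carrier E" "\<And>s. s \<in> S \<Longrightarrow> pr (sigma s) = s"
    using pr_section[OF H.gens_closed] by blast
  obtain M where M: "M \<ge> 0"
    "\<And>l h. set l \<subseteq> S \<Longrightarrow> word_eval E sigma l = iota h \<Longrightarrow> h \<le> M * int (length l)"
    using hyperbolic_loop_height_linear[OF S(2,1) sigma] by blast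
  have "\<forall>x\<in>Xg. \<exists>w. set w \<subseteq> S \<and> word_eval G id w = pr (phi x)"
    using H.words_reach phi by (simp add: image_subset_iff)
  from bchoice[OF this] obtain r where "\<forall>x\<in>Xg. set (r x) \<subseteq> S \<and> word_eval G id (r x) = pr (phi x)"
    by blast
  then have r: "\<And>x. x \<in> Xg \<Longrightarrow> set (r x) \<subseteq> S" "\<And>x. x \<in> Xg \<Longrightarrow> word_eval G id (r x) = pr (phi x)"
    by simp_all
  have "\<forall>x\<in>Xg. \<exists>c. word_eval E sigma (r x) = iota c \<otimes> phi x"
  proof
    fix x assume x: "x \<in> Xg"
    have "pr (word_eval E sigma (r x)) = pr (phi x)"
      using word_eval_lift[OF sigma r(1)[OF x]] r(2)[OF x] by simp
    moreover have "sigma ` set (r x) \<subseteq> carrier E" "phi x \<in> carrier E"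
      using r(1)[OF x] sigma(1) phi x by auto
    ultimately obtain c where "word_eval E sigma (r x) = iota c \<otimes> phi x"
      using same_fibre_iota[OF word_eval_closed] by blast
    then show "\<exists>c. word_eval E sigma (r x) = iota c \<otimes> phi x" ..
  qed
  from bchoice[OF this] obtain c
    where c: "\<And>x. x \<in> Xg \<Longrightarrow> word_eval E sigma (r x) = iota (c x) \<otimes> phi x"
    by blast
  show ?thesis
    using loop_height_transfer[OF assms(2) phi sigma(1) M r(1) c] that by blast
qed

end

section \<open>Penalized maximal words are quasigeodesic\<close>

lemma quasigeodesic_pathI:
  fixes d :: "'a \<Rightarrow> 'a \<Rightarrow> nat" and lam :: real
  assumes "lam \<ge> 1"
    and bounds: "\<And>s t. s \<le> t \<Longrightarrow> t \<le> n \<Longrightarrow> d (p s) (p t) \<le> t - s \<and> real (t - s) \<le> lam * d (p s) (p t)"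
    and sym: "\<And>s t. s \<le> n \<Longrightarrow> t \<le> n \<Longrightarrow> d (p s) (p t) = d (p t) (p s)"
  shows "quasigeodesic_path d lam 0 p n"
proof -
  have ordered: "\<bar>real s - real t\<bar> / lam \<le> d (p s) (p t) \<and> d (p s) (p t) \<le> lam * \<bar>real s - real t\<bar>"
    if "s \<le> t" "t \<le> n" for s t
  proof -
    have "real (d (p s) (p t)) \<le> real (t - s)" "real (t - s) \<le> lam * d (p s) (p t)"
      using bounds[OF that] by simp_all
    moreover have "real (t - s) \<le> lam * real (t - s)"
      using assms(1) by (simp add: mult_le_cancel_right1)
    ultimately show ?thesis
      using that assms(1) by (simp add: of_nat_diff divide_le_eq mult.commute)
  qed
  have "\<bar>real s - real t\<bar> / lam \<le> d (p s) (p t) \<and> d (p s) (p t) \<le> lam * \<bar>real s - real t\<bar>"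
    if "s \<le> n" "t \<le> n" for s t
  proof (cases "s \<le> t")
    case True
    then show ?thesis
      using ordered that by blast
  next
    case False
    then have "\<bar>real t - real s\<bar> / lam \<le> d (p t) (p s) \<and> d (p t) (p s) \<le> lam * \<bar>real t - real s\<bar>"
      using ordered that by simp
    then show ?thesis
      using sym[OF that] by (simp add: abs_minus_commute)
  qed
  then show ?thesis
    unfolding quasigeodesic_path_def by simp
qed

locale central_ext_gens = central_ext G E iota pr
  for G :: "('g, 'c) monoid_scheme" and E :: "('e, 'b) monoid_scheme" (structure) and iota pr +
  fixes Xg :: "'x set" and phi :: "'x \<Rightarrow> 'e"
  assumes hyperbolic: "hyperbolic_group G" and finite_gens: "finite Xg"
    and phi_closed: "phi ` Xg \<subseteq> carrier E"
    and phi_inv_closed: "\<forall>x\<in>Xg. inv (phi x) \<in> phi ` Xg"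
    and phi_generate: "generate E (phi ` Xg) = carrier E"
begin

abbreviation quotient_gens :: "'g set" where
  "quotient_gens \<equiv> (\<lambda>x. pr (phi x)) ` Xg"

abbreviation quotient_dist :: "'g \<Rightarrow> 'g \<Rightarrow> nat" where
  "quotient_dist \<equiv> word_dist G quotient_gens"

abbreviation prefix_image :: "'x list \<Rightarrow> nat \<Rightarrow> 'g" where
  "prefix_image w t \<equiv> pr (word_eval E phi (take t w))"

definition penalized :: "int \<Rightarrow> 'x list \<Rightarrow> 'e" where
  "penalized C w = word_eval E phi w \<otimes> iota (- C * int (length w))"

definition penalized_max :: "int \<Rightarrow> 'g \<Rightarrow> 'x list \<Rightarrow> bool" where
  "penalized_max C g w0 \<longleftrightarrow> set w0 \<subseteq> Xg \<and> pr (word_eval E phi w0) = g \<and>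
    (\<forall>w. set w \<subseteq> Xg \<and> pr (word_eval E phi w) = g \<longrightarrow>
       fibre_le iota E (penalized C w) (penalized C w0))"

definition linear_fibre_bound :: "int \<Rightarrow> bool" where
  "linear_fibre_bound K \<longleftrightarrow> (\<forall>w u j. set w \<subseteq> Xg \<longrightarrow> set u \<subseteq> Xg \<longrightarrow>
    word_eval E phi w = iota j \<otimes> word_eval E phi u \<longrightarrow> j \<le> K * (int (length w) + int (length u)))"

lemma word_eval_gens_closed [simp]: "set w \<subseteq> Xg \<Longrightarrow> word_eval E phi w \<in> carrier E"
  using phi_closed by (intro word_eval_closed) auto

lemma word_eval_gens_append:
  "set w1 \<subseteq> Xg \<Longrightarrow> set w2 \<subseteq> Xg \<Longrightarrow> word_eval E phi (w1 @ w2) = word_eval E phi w1 \<otimes> word_eval E phi w2"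
  using phi_closed by (intro word_eval_append) auto

lemma pr_word_eval:
  assumes "set w \<subseteq> Xg"
  shows "pr (word_eval E phi w) = word_eval G id (map (\<lambda>x. pr (phi x)) w)"
proof -
  have "phi ` set w \<subseteq> carrier E"
    using assms phi_closed by auto
  then show ?thesis
    by (simp add: pr.word_eval_hom word_eval_map comp_def)
qed

lemma word_eval_onto: "e \<in> carrier E \<Longrightarrow> \<exists>w. set w \<subseteq> Xg \<and> word_eval E phi w = e"
proof -
  assume "e \<in> carrier E"
  then obtain ws where ws: "set ws \<subseteq> phi ` Xg" "word_eval E id ws = e"
    using words_of_generate[OF phi_closed] phi_inv_closed phi_generate by blast
  obtain w where "set w \<subseteq> Xg" "ws = map phi w"
    using obtain_map_preimage[OF ws(1)] .
  then show ?thesis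
    using ws(2) by (auto simp: word_eval_map)
qed

lemma pr_word_eval_onto:
  assumes "g \<in> carrier G"
  obtains w where "set w \<subseteq> Xg" "pr (word_eval E phi w) = g"
proof -
  have "g \<in> pr ` carrier E"
    using pr_surj assms by simp
  then obtain e where "g = pr e" "e \<in> carrier E"
    by (rule imageE)
  then show ?thesis
    using word_eval_onto that by blast
qed

lemma inverse_word:
  assumes "set w \<subseteq> Xg"
  obtains w'
  where "set w' \<subseteq> Xg" "length w' = length w" "word_eval E phi w' = inv (word_eval E phi w)"
proof -
  have "\<forall>x\<in>Xg. \<exists>y. y \<in> Xg \<and> phi y = inv (phi x)"
    using phi_inv_closed by force
  from bchoice[OF this] obtain ix where ix: "\<forall>x\<in>Xg. ix x \<in> Xg \<and> phi (ix x) = inv (phi x)"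
    by blast
  have "word_eval E phi (rev (map ix w)) = inv (word_eval E phi w)"
    using assms ix phi_closed by (intro word_eval_rev_map_inv) auto
  moreover have "set (rev (map ix w)) \<subseteq> Xg"
    using assms ix by auto
  ultimately show ?thesis
    using that[of "rev (map ix w)"] by simp
qed

sublocale Q: word_metric G quotient_gens
proof (unfold_locales)
  show "quotient_gens \<subseteq> carrier G"
    using phi_closed by auto
  show "\<forall>s\<in>quotient_gens. inv\<^bsub>G\<^esub> s \<in> quotient_gens"
  proof
    fix s assume "s \<in> quotient_gens"
    then obtain x where x: "x \<in> Xg" "s = pr (phi x)"
      by blast
    then have "inv (phi x) \<in> phi ` Xg"
      using phi_inv_closed by blast
    then obtain y where y: "y \<in> Xg" "inv (phi x) = phi y"
      by (rule imageE)
    have "phi x \<in> carrier E"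
      using phi_closed x(1) by auto
    then have "inv\<^bsub>G\<^esub> s = pr (phi y)"
      using x(2) y(2)[symmetric] by simp
    then show "inv\<^bsub>G\<^esub> s \<in> quotient_gens"
      using y(1) by blast
  qed
  show "\<forall>g\<in>carrier G. \<exists>ws. set ws \<subseteq> quotient_gens \<and> word_eval G id ws = g"
  proof
    fix g assume "g \<in> carrier G"
    then obtain w where w: "set w \<subseteq> Xg" "pr (word_eval E phi w) = g"
      by (rule pr_word_eval_onto)
    then have "set (map (\<lambda>x. pr (phi x)) w) \<subseteq> quotient_gens \<and>
        word_eval G id (map (\<lambda>x. pr (phi x)) w) = g"
      using pr_word_eval[OF w(1)] by auto
    then show "\<exists>ws. set ws \<subseteq> quotient_gens \<and> word_eval G id ws = g"
      by blast
  qed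
qed

lemma lift_geodesic:
  assumes "a \<in> carrier G" and "b \<in> carrier G"
  obtains u where "set u \<subseteq> Xg" "length u = word_dist G quotient_gens a b"
    "pr (word_eval E phi u) = inv\<^bsub>G\<^esub> a \<otimes>\<^bsub>G\<^esub> b"
proof -
  obtain us where us: "set us \<subseteq> quotient_gens" "length us = word_dist G quotient_gens a b"
    "word_eval G id us = inv\<^bsub>G\<^esub> a \<otimes>\<^bsub>G\<^esub> b"
    using Q.geodesic_word[OF assms] by blast
  obtain u where u: "set u \<subseteq> Xg" "us = map (\<lambda>x. pr (phi x)) u"
    using obtain_map_preimage[OF us(1)] .
  show ?thesis
    using that[OF u(1)] us u(2) pr_word_eval[OF u(1)] by simp
qed

lemma ex_linear_fibre_bound:
  obtains K where "K \<ge> 0" "linear_fibre_bound K"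
proof -
  obtain K where K: "K \<ge> 0"
    "\<And>l h. set l \<subseteq> Xg \<Longrightarrow> word_eval E phi l = iota h \<Longrightarrow> h \<le> K * int (length l)"
    using loop_height_linear[OF hyperbolic finite_gens phi_closed] by blast
  have "j \<le> K * (int (length w) + int (length u))"
    if w: "set w \<subseteq> Xg" and u: "set u \<subseteq> Xg"
      and j: "word_eval E phi w = iota j \<otimes> word_eval E phi u" for w u j
  proof -
    obtain u' where u': "set u' \<subseteq> Xg" "length u' = length u"
      "word_eval E phi u' = inv (word_eval E phi u)"
      using inverse_word[OF u] .
    have "word_eval E phi (w @ u') = iota j"
      using w u u' j by (simp add: word_eval_gens_append m_assoc)
    then have "j \<le> K * int (length (w @ u'))"
      using K(2)[of "w @ u'" j] w u'(1) by simp
    then show ?thesis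
      using u'(2) by simp
  qed
  then show ?thesis
    using that K(1) unfolding linear_fibre_bound_def by blast
qed

lemma penalized_eq:
  assumes "set w \<subseteq> Xg" "e \<in> carrier E" "word_eval E phi w = iota j \<otimes> e"
  shows "penalized C w = iota (j - C * int (length w)) \<otimes> e"
proof -
  have "penalized C w = iota j \<otimes> (e \<otimes> iota (- C * int (length w)))"
    unfolding penalized_def using assms by (simp add: m_assoc)
  also have "\<dots> = iota j \<otimes> (iota (- C * int (length w)) \<otimes> e)"
    by (simp only: iota_central[OF assms(2)])
  also have "\<dots> = iota (j - C * int (length w)) \<otimes> e"
    using assms(2) by (simp add: m_assoc[symmetric] flip: iota_add)
  finally show ?thesis .
qed

lemma penalized_offset:
  assumes K: "linear_fibre_bound K" "K \<le> C" and w: "set w \<subseteq> Xg" and u: "set u \<subseteq> Xg"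
    and "pr (word_eval E phi w) = pr (word_eval E phi u)"
  obtains n where "penalized C w = iota n \<otimes> word_eval E phi u" "n \<le> K * int (length u)"
proof -
  obtain j where j: "word_eval E phi w = iota j \<otimes> word_eval E phi u"
    using same_fibre_iota[of "word_eval E phi w" "word_eval E phi u"] w u assms(5) by auto
  then have "j \<le> K * (int (length w) + int (length u))"
    using K(1) w u unfolding linear_fibre_bound_def by blast
  moreover have "K * int (length w) \<le> C * int (length w)"
    using K(2) by (simp add: mult_right_mono)
  ultimately have "j - C * int (length w) \<le> K * int (length u)"
    by (simp add: algebra_simps)
  moreover have "penalized C w = iota (j - C * int (length w)) \<otimes> word_eval E phi u"
    using w _ j by (rule penalized_eq) (simp add: u)
  ultimately show ?thesis
    using that by blast
qed

lemma penalized_max_exists: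
  assumes K: "linear_fibre_bound K" "K \<le> C" and "g \<in> carrier G"
  obtains w0 where "penalized_max C g w0"
proof -
  obtain u0 where u0: "set u0 \<subseteq> Xg" "pr (word_eval E phi u0) = g"
    using pr_word_eval_onto[OF assms(3)] .
  have bounded: "\<exists>n. penalized C w = iota n \<otimes> word_eval E phi u0 \<and> n \<le> K * int (length u0)"
    if w: "set w \<subseteq> Xg \<and> pr (word_eval E phi w) = g" for w
  proof -
    have "pr (word_eval E phi w) = pr (word_eval E phi u0)"
      using w u0(2) by simp
    then obtain n where "penalized C w = iota n \<otimes> word_eval E phi u0" "n \<le> K * int (length u0)"
      using penalized_offset[OF K conjunct1[OF w] u0(1)] by blast
    then show ?thesis
      by blast
  qed
  have "set u0 \<subseteq> Xg \<and> pr (word_eval E phi u0) = g"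
    using u0 by simp
  then obtain w0 where "set w0 \<subseteq> Xg \<and> pr (word_eval E phi w0) = g"
    "\<And>w. set w \<subseteq> Xg \<and> pr (word_eval E phi w) = g \<Longrightarrow> fibre_le iota E (penalized C w) (penalized C w0)"
    using fibre_le_max_exists[where P = "\<lambda>w. set w \<subseteq> Xg \<and> pr (word_eval E phi w) = g"
        and f = "penalized C", OF word_eval_gens_closed[OF u0(1)] _ bounded]
    by blast
  then have "penalized_max C g w0"
    unfolding penalized_max_def by blast
  then show ?thesis
    by (rule that)
qed

lemma penalized_max_subword_bound:
  assumes K: "linear_fibre_bound K" and max: "penalized_max C g (a @ v @ b)"
    and u: "set u \<subseteq> Xg" "pr (word_eval E phi u) = pr (word_eval E phi v)"
  shows "(C - K) * int (length v) \<le> (C + K) * int (length u)"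
proof -
  have abv: "set a \<subseteq> Xg" "set v \<subseteq> Xg" "set b \<subseteq> Xg"
    using max unfolding penalized_max_def by auto
  obtain j where j: "word_eval E phi v = iota j \<otimes> word_eval E phi u"
    using same_fibre_iota[of "word_eval E phi v" "word_eval E phi u"] abv(2) u by auto
  then have jK: "j \<le> K * (int (length v) + int (length u))"
    using K abv(2) u(1) unfolding linear_fibre_bound_def by blast
  define w1 where "w1 = a @ u @ b"
  have w1: "set w1 \<subseteq> Xg"
    unfolding w1_def using abv u(1) by simp
  have "phi ` (set a \<union> set v \<union> set u \<union> set b) \<subseteq> carrier E"
    using abv u(1) phi_closed by blast
  from word_eval_splice[OF this j]
  have ev: "word_eval E phi (a @ v @ b) = iota j \<otimes> word_eval E phi w1"
    unfolding w1_def .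
  then have "pr (word_eval E phi w1) = g"
    using max w1 unfolding penalized_max_def by simp
  then have "fibre_le iota E (penalized C w1) (penalized C (a @ v @ b))"
    using max w1 unfolding penalized_max_def by blast
  moreover have "penalized C w1 = iota (0 - C * int (length w1)) \<otimes> word_eval E phi w1"
    using w1 by (intro penalized_eq) simp_all
  moreover have
    "penalized C (a @ v @ b) = iota (j - C * int (length (a @ v @ b))) \<otimes> word_eval E phi w1"
    using abv w1 ev by (intro penalized_eq) simp_all
  ultimately have "0 - C * int (length w1) \<le> j - C * int (length (a @ v @ b))"
    using fibre_le_iota_mult w1 by simp
  then show ?thesis
    using jK unfolding w1_def by (simp add: algebra_simps)
qed

lemma penalized_max_segment_bound:
  assumes K: "linear_fibre_bound K" and "K < C" and max: "penalized_max C g w0"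
    and st: "s \<le> t" "t \<le> length w0"
  shows "int (t - s) \<le> (C + K) * int (quotient_dist (prefix_image w0 s) (prefix_image w0 t))"
proof -
  define v where "v = take (t - s) (drop s w0)"
  have w0: "set w0 \<subseteq> Xg"
    using max unfolding penalized_max_def by simp
  have prefix: "set (take s w0) \<subseteq> Xg" "set v \<subseteq> Xg"
    unfolding v_def using w0 set_take_subset set_drop_subset by fastforce+
  have "take t w0 = take s w0 @ v"
    unfolding v_def using take_add[of s "t - s" w0] st(1) by simp
  then have split: "w0 = take s w0 @ v @ drop t w0"
    using append_take_drop_id[of t w0] by simp
  have "penalized_max C g (take s w0 @ v @ drop t w0)"
    by (subst split[symmetric]) (rule max)
  moreover have P: "prefix_image w0 i \<in> carrier G" for i
    using word_eval_gens_closed[OF subset_trans[OF set_take_subset w0]] by simp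
  obtain u where u: "set u \<subseteq> Xg" "length u = quotient_dist (prefix_image w0 s) (prefix_image w0 t)"
    "pr (word_eval E phi u) = inv\<^bsub>G\<^esub> prefix_image w0 s \<otimes>\<^bsub>G\<^esub> prefix_image w0 t"
    using lift_geodesic[OF P P] by blast
  have "prefix_image w0 t = prefix_image w0 s \<otimes>\<^bsub>G\<^esub> pr (word_eval E phi v)"
    using \<open>take t w0 = take s w0 @ v\<close> prefix by (simp add: word_eval_gens_append)
  then have "pr (word_eval E phi u) = pr (word_eval E phi v)"
    using u(3) P prefix(2) by (simp add: pr.H.m_assoc[symmetric])
  ultimately have "(C - K) * int (length v) \<le> (C + K) * int (length u)"
    by (rule penalized_max_subword_bound[OF K _ u(1)])
  moreover have "length v = t - s"
    unfolding v_def using st by simp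
  ultimately have "(C - K) * int (t - s) \<le> (C + K) * int (length u)"
    by simp
  moreover have "int (t - s) \<le> (C - K) * int (t - s)"
    using \<open>K < C\<close> by (simp add: mult_le_cancel_right1)
  ultimately show ?thesis
    unfolding u(2) by linarith
qed

lemma penalized_max_quasigeodesic:
  assumes K: "linear_fibre_bound K" "0 \<le> K" and "K < C" and max: "penalized_max C g w0"
  shows "quasigeodesic_path quotient_dist (of_int (C + K)) 0 (prefix_image w0) (length w0)"
proof (rule quasigeodesic_pathI)
  define ws where "ws = map (\<lambda>x. pr (phi x)) w0"
  have w0: "set w0 \<subseteq> Xg"
    using max unfolding penalized_max_def by simp
  have ws: "set ws \<subseteq> quotient_gens"
    unfolding ws_def using w0 by auto
  have P_closed: "word_eval G id (take t ws) \<in> carrier G" for t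
    using Q.word_eval_gens_closed[OF subset_trans[OF set_take_subset ws]] .
  have path: "prefix_image w0 t = word_eval G id (take t ws)" for t
    unfolding ws_def take_map using pr_word_eval[OF subset_trans[OF set_take_subset w0]] .
  show "1 \<le> real_of_int (C + K)"
    using assms(2,3) by simp
  fix s t
  show "quotient_dist (prefix_image w0 s) (prefix_image w0 t) =
      quotient_dist (prefix_image w0 t) (prefix_image w0 s)"
    unfolding path by (rule Q.word_dist_commute[OF P_closed P_closed])
  assume st: "s \<le> t" "t \<le> length w0"
  let ?d = "quotient_dist (prefix_image w0 s) (prefix_image w0 t)"
  have "real_of_int (int (t - s)) \<le> real_of_int ((C + K) * int ?d)"
    using penalized_max_segment_bound[OF K(1) assms(3) max st] by (simp only: of_int_le_iff)
  moreover have "?d \<le> t - s"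
    unfolding path by (rule Q.word_dist_take_le[OF ws st(1)])
  ultimately show "?d \<le> t - s \<and> real (t - s) \<le> real_of_int (C + K) * real ?d"
    by simp
qed

end

theorem lemma2p1:
  fixes G :: "('g, 'c) monoid_scheme" and E :: "('e, 'b) monoid_scheme"
    and iota :: "int \<Rightarrow> 'e" and pr :: "'e \<Rightarrow> 'g"
    and Xg :: "'x set" and phi :: "'x \<Rightarrow> 'e"
  assumes hyp: "hyperbolic_group G"
    and ext: "central_extension iota E pr G"
    and finX: "finite Xg"
    and phiX: "phi ` Xg \<subseteq> carrier E"
    and symm: "\<forall>x\<in>Xg. inv\<^bsub>E\<^esub> (phi x) \<in> phi ` Xg"
    and gen: "generate E (phi ` Xg) = carrier E"
  shows "\<exists>C::int. C > 0 \<and>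
    (\<forall>g\<in>carrier G. \<exists>w0. set w0 \<subseteq> Xg \<and> pr (word_eval E phi w0) = g \<and>
        (\<forall>w. set w \<subseteq> Xg \<and> pr (word_eval E phi w) = g \<longrightarrow>
           fibre_le iota E (word_eval E phi w \<otimes>\<^bsub>E\<^esub> iota (- C * int (length w)))
                        (word_eval E phi w0 \<otimes>\<^bsub>E\<^esub> iota (- C * int (length w0))))) \<and>
    (\<exists>lam::real. lam > 0 \<and>
      (\<forall>g\<in>carrier G. \<forall>w0. set w0 \<subseteq> Xg \<and> pr (word_eval E phi w0) = g \<and>
        (\<forall>w. set w \<subseteq> Xg \<and> pr (word_eval E phi w) = g \<longrightarrow>
           fibre_le iota E (word_eval E phi w \<otimes>\<^bsub>E\<^esub> iota (- C * int (length w)))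
                        (word_eval E phi w0 \<otimes>\<^bsub>E\<^esub> iota (- C * int (length w0))))
        \<longrightarrow> quasigeodesic_path (word_dist G ((\<lambda>x. pr (phi x)) ` Xg)) lam 0
              (\<lambda>t. pr (word_eval E phi (take t w0))) (length w0)))"
proof -
  interpret central_ext_gens G E iota pr Xg phi
    using assms by (simp add: central_ext_gens_def central_ext_def central_ext_gens_axioms_def)
  obtain K where K: "K \<ge> 0" "linear_fibre_bound K"
    by (rule ex_linear_fibre_bound)
  define C where "C = K + 1"
  then have "K < C"
    by simp
  have "\<forall>g\<in>carrier G. \<exists>w0. penalized_max C g w0"
    using penalized_max_exists[OF K(2) less_imp_le[OF \<open>K < C\<close>]] by blast
  moreover have "\<forall>g\<in>carrier G. \<forall>w0. penalized_max C g w0 \<longrightarrow>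
      quasigeodesic_path quotient_dist (of_int (C + K)) 0 (prefix_image w0) (length w0)"
    using penalized_max_quasigeodesic[OF K(2,1) \<open>K < C\<close>] by blast
  moreover have "C > 0" "real_of_int (C + K) > 0"
    unfolding C_def using K(1) by simp_all
  ultimately show ?thesis
    unfolding penalized_max_def penalized_def by blast
qed

end
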